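(* In a coherent differential summable resource category $\mathcal L$ (see context), call $f\in\mathcal L_!(X_0\&\cdots\&X_n,Y)$ $(n+1)$-linear if $f=\mathcal M(l)$ for some $l\in\mathcal L(X_0\otimes\cdots\otimes X_n,Y)$. If $f$ is $(n+1)$-linear, then $Df\in\mathcal L_!(SX_0\&\cdots\&SX_n,SY)$ is also $(n+1)$-linear.
   Context: $\mathcal L$ is a symmetric monoidal closed category with finite products ($\&$, projections $p_i$, terminal $\top$), resource comonad $(!,\mathrm{der},\mathrm{dig})$ and Seely isomorphisms $m^0,m^2$; $m^n\in\mathcal L(!X_0\otimes\cdots\otimes!X_n,!(X_0\&\cdots\&X_n))$ is the induced $(n+1)$-ary Seely isomorphism. Kleisli category $\mathcal L_!$: $\mathcal L_!(X,Y)=\mathcal L(!X,Y)$, $g\circ_!f=g\circ!f\circ\mathrm{dig}_X$. For $l\in\mathcal L(X_0\otimes\cdots\otimes X_n,Y)$, $\mathcal M(l)=l\circ(\mathrm{der}_{X_0}\otimes\cdots\otimes\mathrm{der}_{X_n})\circ(m^n)^{-1}$. $\mathcal L$ has zero morphisms and a summability structure $(S,\pi_0,\pi_1,\sigma)$ ($\pi_0,\pi_1$ jointly monic, $f_0+f_1=\sigma\langle f_0,f_1\rangle$) satisfying the axioms of Ehrhard's coherent differentiation (homsets partial commutative monoids, composition and $\otimes$ distribute over sums); $\iota_0=\langle\mathrm{id},0\rangle$; $\tau:S^2\Rightarrow S$ with $\pi_0\tau=\pi_0\pi_0$, $\pi_1\tau=\pi_1\pi_0+\pi_0\pi_1$;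 flip $c$ with $\pi_i\pi_jc=\pi_j\pi_i$; $S$ preserves products strictly; $L_{X_0,X_1}\in\mathcal L(SX_0\otimes SX_1,S(X_0\otimes X_1))$ with $\pi_0L=\pi_0\otimes\pi_0$, $\pi_1L=\pi_1\otimes\pi_0+\pi_0\otimes\pi_1$. A natural $\partial_X\in\mathcal L(!SX,S!X)$ satisfies: $\pi_0\partial_X=!\pi_0$; $\partial_X\circ!\iota_0=\iota_0$, $\tau\circ S\partial_X\circ\partial_{SX}=\partial_X\circ!\tau$; $S\mathrm{der}_X\circ\partial_X=\mathrm{der}_{SX}$, $S\mathrm{dig}_X\circ\partial_X=\partial_{!X}\circ!\partial_X\circ\mathrm{dig}_{SX}$; $S(m^0)^{-1}\partial_\top=\iota_0(m^0)^{-1}!0$, $S(m^2)^{-1}\partial_{X_0\&X_1}=L_{!X_0,!X_1}(\partial_{X_0}\otimes\partial_{X_1})(m^2_{SX_0,SX_1})^{-1}$; $c\circ S\partial_X\circ\partial_{SX}=S\partial_X\circ\partial_{SX}\circ!c$. $D$ is the functor on $\mathcal L_!$ with $DX=SX$, $Df=Sf\circ\partial_X$. *)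

theory Defs
  imports Main
begin

text \<open>A coherent differential summable resource category, encoded as a record of
  operations (objects of type 'o, morphisms of type 'a, typed via hom-sets)
  together with a predicate collecting all axioms.\<close>

record ('o, 'a) rcat =
  chom   :: "'o \<Rightarrow> 'o \<Rightarrow> 'a set"
  ccomp  :: "'a \<Rightarrow> 'a \<Rightarrow> 'a"      (* ccomp g f = g o f *)
  cid    :: "'o \<Rightarrow> 'a"
  ctens  :: "'o \<Rightarrow> 'o \<Rightarrow> 'o"
  ctensm :: "'a \<Rightarrow> 'a \<Rightarrow> 'a"
  cunit  :: "'o"
  cassoc :: "'o \<Rightarrow> 'o \<Rightarrow> 'o \<Rightarrow> 'a"
  clunit :: "'o \<Rightarrow> 'a"
  crunit :: "'o \<Rightarrow> 'a"
  csymm  :: "'o \<Rightarrow> 'o \<Rightarrow> 'a"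
  clolli :: "'o \<Rightarrow> 'o \<Rightarrow> 'o"
  ceval  :: "'o \<Rightarrow> 'o \<Rightarrow> 'a"
  cwith  :: "'o \<Rightarrow> 'o \<Rightarrow> 'o"
  cp0    :: "'o \<Rightarrow> 'o \<Rightarrow> 'a"
  cp1    :: "'o \<Rightarrow> 'o \<Rightarrow> 'a"
  cpair  :: "'a \<Rightarrow> 'a \<Rightarrow> 'a"
  ctop   :: "'o"
  cterm  :: "'o \<Rightarrow> 'a"
  cbang  :: "'o \<Rightarrow> 'o"
  cbangm :: "'a \<Rightarrow> 'a"
  cder   :: "'o \<Rightarrow> 'a"
  cdig   :: "'o \<Rightarrow> 'a"
  cm0    :: "'a"
  cm2    :: "'o \<Rightarrow> 'o \<Rightarrow> 'a"
  czero  :: "'o \<Rightarrow> 'o \<Rightarrow> 'a"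
  cS     :: "'o \<Rightarrow> 'o"
  cSm    :: "'a \<Rightarrow> 'a"
  cpi0   :: "'o \<Rightarrow> 'a"
  cpi1   :: "'o \<Rightarrow> 'a"
  csig   :: "'o \<Rightarrow> 'a"
  ctau   :: "'o \<Rightarrow> 'a"
  cflip  :: "'o \<Rightarrow> 'a"
  cL     :: "'o \<Rightarrow> 'o \<Rightarrow> 'a"
  cdiff  :: "'o \<Rightarrow> 'a"

definition is_iso :: "('o,'a) rcat \<Rightarrow> 'o \<Rightarrow> 'o \<Rightarrow> 'a \<Rightarrow> bool" where
  "is_iso C X Y f \<longleftrightarrow> f \<in> chom C X Y \<and>
     (\<exists>g \<in> chom C Y X. ccomp C g f = cid C X \<and> ccomp C f g = cid C Y)"

definition invm :: "('o,'a) rcat \<Rightarrow> 'o \<Rightarrow> 'o \<Rightarrow> 'a \<Rightarrow> 'a" where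
  "invm C X Y f = (THE g. g \<in> chom C Y X \<and> ccomp C g f = cid C X \<and> ccomp C f g = cid C Y)"

definition category_ax :: "('o,'a) rcat \<Rightarrow> bool" where
  "category_ax C \<longleftrightarrow>
    (\<forall>X. cid C X \<in> chom C X X) \<and>
    (\<forall>X Y Z f g. f \<in> chom C X Y \<longrightarrow> g \<in> chom C Y Z \<longrightarrow> ccomp C g f \<in> chom C X Z) \<and>
    (\<forall>X Y f. f \<in> chom C X Y \<longrightarrow> ccomp C f (cid C X) = f \<and> ccomp C (cid C Y) f = f) \<and>
    (\<forall>W X Y Z f g h. f \<in> chom C W X \<longrightarrow> g \<in> chom C X Y \<longrightarrow> h \<in> chom C Y Z \<longrightarrow>
        ccomp C h (ccomp C g f) = ccomp C (ccomp C h g) f)"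

definition smc_ax :: "('o,'a) rcat \<Rightarrow> bool" where
  "smc_ax C \<longleftrightarrow>
    (\<forall>X X' Y Y' f g. f \<in> chom C X Y \<longrightarrow> g \<in> chom C X' Y' \<longrightarrow>
        ctensm C f g \<in> chom C (ctens C X X') (ctens C Y Y')) \<and>
    (\<forall>X Y. ctensm C (cid C X) (cid C Y) = cid C (ctens C X Y)) \<and>
    (\<forall>X Y Z X' Y' Z' f g f' g'. f \<in> chom C X Y \<longrightarrow> g \<in> chom C Y Z \<longrightarrow>
        f' \<in> chom C X' Y' \<longrightarrow> g' \<in> chom C Y' Z' \<longrightarrow>
        ctensm C (ccomp C g f) (ccomp C g' f') = ccomp C (ctensm C g g') (ctensm C f f')) \<and>
    (\<forall>X Y Z. is_iso C (ctens C (ctens C X Y) Z) (ctens C X (ctens C Y Z)) (cassoc C X Y Z)) \<and>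
    (\<forall>X Y Z X' Y' Z' f g h. f \<in> chom C X X' \<longrightarrow> g \<in> chom C Y Y' \<longrightarrow> h \<in> chom C Z Z' \<longrightarrow>
        ccomp C (cassoc C X' Y' Z') (ctensm C (ctensm C f g) h)
        = ccomp C (ctensm C f (ctensm C g h)) (cassoc C X Y Z)) \<and>
    (\<forall>X. is_iso C (ctens C (cunit C) X) X (clunit C X)) \<and>
    (\<forall>X Y f. f \<in> chom C X Y \<longrightarrow>
        ccomp C f (clunit C X) = ccomp C (clunit C Y) (ctensm C (cid C (cunit C)) f)) \<and>
    (\<forall>X. is_iso C (ctens C X (cunit C)) X (crunit C X)) \<and>
    (\<forall>X Y f. f \<in> chom C X Y \<longrightarrow>
        ccomp C f (crunit C X) = ccomp C (crunit C Y) (ctensm C f (cid C (cunit C)))) \<and>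
    (\<forall>X Y. csymm C X Y \<in> chom C (ctens C X Y) (ctens C Y X)) \<and>
    (\<forall>X Y. ccomp C (csymm C Y X) (csymm C X Y) = cid C (ctens C X Y)) \<and>
    (\<forall>X Y X' Y' f g. f \<in> chom C X X' \<longrightarrow> g \<in> chom C Y Y' \<longrightarrow>
        ccomp C (csymm C X' Y') (ctensm C f g) = ccomp C (ctensm C g f) (csymm C X Y)) \<and>
    (\<forall>W X Y Z.
        ccomp C (cassoc C W X (ctens C Y Z)) (cassoc C (ctens C W X) Y Z)
        = ccomp C (ctensm C (cid C W) (cassoc C X Y Z))
            (ccomp C (cassoc C W (ctens C X Y) Z) (ctensm C (cassoc C W X Y) (cid C Z)))) \<and>
    (\<forall>X Y. ccomp C (ctensm C (cid C X) (clunit C Y)) (cassoc C X (cunit C) Y)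
        = ctensm C (crunit C X) (cid C Y)) \<and>
    (\<forall>X Y Z.
        ccomp C (cassoc C Y Z X) (ccomp C (csymm C X (ctens C Y Z)) (cassoc C X Y Z))
        = ccomp C (ctensm C (cid C Y) (csymm C X Z))
            (ccomp C (cassoc C Y X Z) (ctensm C (csymm C X Y) (cid C Z)))) \<and>
    (\<forall>X Y. ceval C X Y \<in> chom C (ctens C (clolli C X Y) X) Y) \<and>
    (\<forall>X Y Z f. f \<in> chom C (ctens C Z X) Y \<longrightarrow>
        (\<exists>!h. h \<in> chom C Z (clolli C X Y) \<and> ccomp C (ceval C X Y) (ctensm C h (cid C X)) = f))"

definition products_ax :: "('o,'a) rcat \<Rightarrow> bool" where
  "products_ax C \<longleftrightarrow>
    (\<forall>X Y. cp0 C X Y \<in> chom C (cwith C X Y) X \<and> cp1 C X Y \<in> chom C (cwith C X Y) Y) \<and>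
    (\<forall>X Y Z f g. f \<in> chom C Z X \<longrightarrow> g \<in> chom C Z Y \<longrightarrow>
        cpair C f g \<in> chom C Z (cwith C X Y) \<and>
        ccomp C (cp0 C X Y) (cpair C f g) = f \<and> ccomp C (cp1 C X Y) (cpair C f g) = g) \<and>
    (\<forall>X Y Z h. h \<in> chom C Z (cwith C X Y) \<longrightarrow>
        h = cpair C (ccomp C (cp0 C X Y) h) (ccomp C (cp1 C X Y) h)) \<and>
    (\<forall>X. cterm C X \<in> chom C X (ctop C)) \<and>
    (\<forall>X f. f \<in> chom C X (ctop C) \<longrightarrow> f = cterm C X)"

definition withm :: "('o,'a) rcat \<Rightarrow> 'o \<Rightarrow> 'o \<Rightarrow> 'a \<Rightarrow> 'a \<Rightarrow> 'a" where
  "withm C X Y f g = cpair C (ccomp C f (cp0 C X Y)) (ccomp C g (cp1 C X Y))"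

definition comonad_ax :: "('o,'a) rcat \<Rightarrow> bool" where
  "comonad_ax C \<longleftrightarrow>
    (\<forall>X Y f. f \<in> chom C X Y \<longrightarrow> cbangm C f \<in> chom C (cbang C X) (cbang C Y)) \<and>
    (\<forall>X. cbangm C (cid C X) = cid C (cbang C X)) \<and>
    (\<forall>X Y Z f g. f \<in> chom C X Y \<longrightarrow> g \<in> chom C Y Z \<longrightarrow>
        cbangm C (ccomp C g f) = ccomp C (cbangm C g) (cbangm C f)) \<and>
    (\<forall>X. cder C X \<in> chom C (cbang C X) X) \<and>
    (\<forall>X. cdig C X \<in> chom C (cbang C X) (cbang C (cbang C X))) \<and>
    (\<forall>X Y f. f \<in> chom C X Y \<longrightarrow> ccomp C (cder C Y) (cbangm C f) = ccomp C f (cder C X)) \<and>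
    (\<forall>X Y f. f \<in> chom C X Y \<longrightarrow>
        ccomp C (cdig C Y) (cbangm C f) = ccomp C (cbangm C (cbangm C f)) (cdig C X)) \<and>
    (\<forall>X. ccomp C (cder C (cbang C X)) (cdig C X) = cid C (cbang C X)) \<and>
    (\<forall>X. ccomp C (cbangm C (cder C X)) (cdig C X) = cid C (cbang C X)) \<and>
    (\<forall>X. ccomp C (cdig C (cbang C X)) (cdig C X) = ccomp C (cbangm C (cdig C X)) (cdig C X))"

text \<open>Seely isomorphisms: (!, m0, m2) is a strong symmetric monoidal functor from
  (L, &, T) to (L, (x), I), compatible with dig (Seely category / resource category).\<close>
definition seely_ax :: "('o,'a) rcat \<Rightarrow> bool" where
  "seely_ax C \<longleftrightarrow>
    is_iso C (cunit C) (cbang C (ctop C)) (cm0 C) \<and>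
    (\<forall>X Y. is_iso C (ctens C (cbang C X) (cbang C Y)) (cbang C (cwith C X Y)) (cm2 C X Y)) \<and>
    (\<forall>X Y X' Y' f g. f \<in> chom C X X' \<longrightarrow> g \<in> chom C Y Y' \<longrightarrow>
        ccomp C (cm2 C X' Y') (ctensm C (cbangm C f) (cbangm C g))
        = ccomp C (cbangm C (withm C X Y f g)) (cm2 C X Y)) \<and>
    (\<forall>X Y Z.
        ccomp C (cbangm C (cpair C (ccomp C (cp0 C X Y) (cp0 C (cwith C X Y) Z))
                               (cpair C (ccomp C (cp1 C X Y) (cp0 C (cwith C X Y) Z))
                                        (cp1 C (cwith C X Y) Z))))
          (ccomp C (cm2 C (cwith C X Y) Z) (ctensm C (cm2 C X Y) (cid C (cbang C Z))))
        = ccomp C (cm2 C X (cwith C Y Z))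
          (ccomp C (ctensm C (cid C (cbang C X)) (cm2 C Y Z))
                   (cassoc C (cbang C X) (cbang C Y) (cbang C Z)))) \<and>
    (\<forall>X. ccomp C (cbangm C (cp1 C (ctop C) X))
          (ccomp C (cm2 C (ctop C) X) (ctensm C (cm0 C) (cid C (cbang C X))))
        = clunit C (cbang C X)) \<and>
    (\<forall>X. ccomp C (cbangm C (cp0 C X (ctop C)))
          (ccomp C (cm2 C X (ctop C)) (ctensm C (cid C (cbang C X)) (cm0 C)))
        = crunit C (cbang C X)) \<and>
    (\<forall>X Y. ccomp C (cbangm C (cpair C (cp1 C X Y) (cp0 C X Y))) (cm2 C X Y)
        = ccomp C (cm2 C Y X) (csymm C (cbang C X) (cbang C Y))) \<and>
    (\<forall>X Y.
        ccomp C (invm C (ctens C (cbang C (cbang C X)) (cbang C (cbang C Y)))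
                        (cbang C (cwith C (cbang C X) (cbang C Y))) (cm2 C (cbang C X) (cbang C Y)))
          (ccomp C (cbangm C (cpair C (cbangm C (cp0 C X Y)) (cbangm C (cp1 C X Y))))
                   (cdig C (cwith C X Y)))
        = ccomp C (ctensm C (cdig C X) (cdig C Y))
            (invm C (ctens C (cbang C X) (cbang C Y)) (cbang C (cwith C X Y)) (cm2 C X Y)))"

definition summable :: "('o,'a) rcat \<Rightarrow> 'o \<Rightarrow> 'o \<Rightarrow> 'a \<Rightarrow> 'a \<Rightarrow> bool" where
  "summable C X Y f0 f1 \<longleftrightarrow> f0 \<in> chom C X Y \<and> f1 \<in> chom C X Y \<and>
     (\<exists>h \<in> chom C X (cS C Y). ccomp C (cpi0 C Y) h = f0 \<and> ccomp C (cpi1 C Y) h = f1)"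

definition spair :: "('o,'a) rcat \<Rightarrow> 'o \<Rightarrow> 'o \<Rightarrow> 'a \<Rightarrow> 'a \<Rightarrow> 'a" where
  "spair C X Y f0 f1 = (THE h. h \<in> chom C X (cS C Y) \<and>
      ccomp C (cpi0 C Y) h = f0 \<and> ccomp C (cpi1 C Y) h = f1)"

definition ssum :: "('o,'a) rcat \<Rightarrow> 'o \<Rightarrow> 'o \<Rightarrow> 'a \<Rightarrow> 'a \<Rightarrow> 'a" where
  "ssum C X Y f0 f1 = ccomp C (csig C Y) (spair C X Y f0 f1)"

definition iota0 :: "('o,'a) rcat \<Rightarrow> 'o \<Rightarrow> 'a" where
  "iota0 C X = spair C X X (cid C X) (czero C X X)"

definition summability_ax :: "('o,'a) rcat \<Rightarrow> bool" where
  "summability_ax C \<longleftrightarrow>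
    \<comment> \<open>zero morphisms\<close>
    (\<forall>X Y. czero C X Y \<in> chom C X Y) \<and>
    (\<forall>X Y Z f. f \<in> chom C X Y \<longrightarrow> ccomp C (czero C Y Z) f = czero C X Z) \<and>
    (\<forall>X Y Z g. g \<in> chom C Y Z \<longrightarrow> ccomp C g (czero C X Y) = czero C X Z) \<and>
    \<comment> \<open>S is a functor, pi0, pi1, sigma natural, pi0 pi1 jointly monic\<close>
    (\<forall>X Y f. f \<in> chom C X Y \<longrightarrow> cSm C f \<in> chom C (cS C X) (cS C Y)) \<and>
    (\<forall>X. cSm C (cid C X) = cid C (cS C X)) \<and>
    (\<forall>X Y Z f g. f \<in> chom C X Y \<longrightarrow> g \<in> chom C Y Z \<longrightarrow>
        cSm C (ccomp C g f) = ccomp C (cSm C g) (cSm C f)) \<and>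
    (\<forall>X. cpi0 C X \<in> chom C (cS C X) X \<and> cpi1 C X \<in> chom C (cS C X) X \<and> csig C X \<in> chom C (cS C X) X) \<and>
    (\<forall>X Y f. f \<in> chom C X Y \<longrightarrow>
        ccomp C (cpi0 C Y) (cSm C f) = ccomp C f (cpi0 C X) \<and>
        ccomp C (cpi1 C Y) (cSm C f) = ccomp C f (cpi1 C X) \<and>
        ccomp C (csig C Y) (cSm C f) = ccomp C f (csig C X)) \<and>
    (\<forall>X Y h h'. h \<in> chom C X (cS C Y) \<longrightarrow> h' \<in> chom C X (cS C Y) \<longrightarrow>
        ccomp C (cpi0 C Y) h = ccomp C (cpi0 C Y) h' \<longrightarrow>
        ccomp C (cpi1 C Y) h = ccomp C (cpi1 C Y) h' \<longrightarrow> h = h') \<and>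
    \<comment> \<open>homsets are partial commutative monoids\<close>
    (\<forall>X Y f. f \<in> chom C X Y \<longrightarrow>
        summable C X Y f (czero C X Y) \<and> ssum C X Y f (czero C X Y) = f) \<and>
    (\<forall>X Y f g. summable C X Y f g \<longrightarrow> summable C X Y g f \<and> ssum C X Y f g = ssum C X Y g f) \<and>
    (\<forall>X Y f g h. summable C X Y f g \<longrightarrow> summable C X Y (ssum C X Y f g) h \<longrightarrow>
        summable C X Y g h \<and> summable C X Y f (ssum C X Y g h) \<and>
        ssum C X Y (ssum C X Y f g) h = ssum C X Y f (ssum C X Y g h)) \<and>
    \<comment> \<open>composition distributes over sums\<close>
    (\<forall>X Y Z f g k. summable C X Y f g \<longrightarrow> k \<in> chom C Y Z \<longrightarrow>
        summable C X Z (ccomp C k f) (ccomp C k g) \<and>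
        ccomp C k (ssum C X Y f g) = ssum C X Z (ccomp C k f) (ccomp C k g)) \<and>
    (\<forall>W X Y f g k. summable C X Y f g \<longrightarrow> k \<in> chom C W X \<longrightarrow>
        summable C W Y (ccomp C f k) (ccomp C g k) \<and>
        ccomp C (ssum C X Y f g) k = ssum C W Y (ccomp C f k) (ccomp C g k)) \<and>
    \<comment> \<open>tensor distributes over sums\<close>
    (\<forall>X Y X' Y' k. k \<in> chom C X' Y' \<longrightarrow>
        ctensm C (czero C X Y) k = czero C (ctens C X X') (ctens C Y Y') \<and>
        ctensm C k (czero C X Y) = czero C (ctens C X' X) (ctens C Y' Y)) \<and>
    (\<forall>X Y X' Y' f g k. summable C X Y f g \<longrightarrow> k \<in> chom C X' Y' \<longrightarrow>
        summable C (ctens C X X') (ctens C Y Y') (ctensm C f k) (ctensm C g k) \<and>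
        ctensm C (ssum C X Y f g) k = ssum C (ctens C X X') (ctens C Y Y') (ctensm C f k) (ctensm C g k) \<and>
        summable C (ctens C X' X) (ctens C Y' Y) (ctensm C k f) (ctensm C k g) \<and>
        ctensm C k (ssum C X Y f g) = ssum C (ctens C X' X) (ctens C Y' Y) (ctensm C k f) (ctensm C k g)) \<and>
    \<comment> \<open>S preserves products strictly\<close>
    (\<forall>X Y. cS C (cwith C X Y) = cwith C (cS C X) (cS C Y) \<and>
        cSm C (cp0 C X Y) = cp0 C (cS C X) (cS C Y) \<and>
        cSm C (cp1 C X Y) = cp1 C (cS C X) (cS C Y)) \<and>
    cS C (ctop C) = ctop C \<and>
    \<comment> \<open>tau\<close>
    (\<forall>X. ctau C X \<in> chom C (cS C (cS C X)) (cS C X) \<and>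
        ccomp C (cpi0 C X) (ctau C X) = ccomp C (cpi0 C X) (cpi0 C (cS C X)) \<and>
        summable C (cS C (cS C X)) X (ccomp C (cpi1 C X) (cpi0 C (cS C X)))
                                     (ccomp C (cpi0 C X) (cpi1 C (cS C X))) \<and>
        ccomp C (cpi1 C X) (ctau C X) = ssum C (cS C (cS C X)) X
              (ccomp C (cpi1 C X) (cpi0 C (cS C X))) (ccomp C (cpi0 C X) (cpi1 C (cS C X)))) \<and>
    (\<forall>X Y f. f \<in> chom C X Y \<longrightarrow>
        ccomp C (ctau C Y) (cSm C (cSm C f)) = ccomp C (cSm C f) (ctau C X)) \<and>
    \<comment> \<open>flip c\<close>
    (\<forall>X. cflip C X \<in> chom C (cS C (cS C X)) (cS C (cS C X)) \<and>
        ccomp C (cpi0 C X) (ccomp C (cpi0 C (cS C X)) (cflip C X)) = ccomp C (cpi0 C X) (cpi0 C (cS C X)) \<and>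
        ccomp C (cpi0 C X) (ccomp C (cpi1 C (cS C X)) (cflip C X)) = ccomp C (cpi1 C X) (cpi0 C (cS C X)) \<and>
        ccomp C (cpi1 C X) (ccomp C (cpi0 C (cS C X)) (cflip C X)) = ccomp C (cpi0 C X) (cpi1 C (cS C X)) \<and>
        ccomp C (cpi1 C X) (ccomp C (cpi1 C (cS C X)) (cflip C X)) = ccomp C (cpi1 C X) (cpi1 C (cS C X))) \<and>
    \<comment> \<open>L\<close>
    (\<forall>X Y. cL C X Y \<in> chom C (ctens C (cS C X) (cS C Y)) (cS C (ctens C X Y)) \<and>
        ccomp C (cpi0 C (ctens C X Y)) (cL C X Y) = ctensm C (cpi0 C X) (cpi0 C Y) \<and>
        summable C (ctens C (cS C X) (cS C Y)) (ctens C X Y)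
           (ctensm C (cpi1 C X) (cpi0 C Y)) (ctensm C (cpi0 C X) (cpi1 C Y)) \<and>
        ccomp C (cpi1 C (ctens C X Y)) (cL C X Y) = ssum C (ctens C (cS C X) (cS C Y)) (ctens C X Y)
           (ctensm C (cpi1 C X) (cpi0 C Y)) (ctensm C (cpi0 C X) (cpi1 C Y)))"

definition diff_ax :: "('o,'a) rcat \<Rightarrow> bool" where
  "diff_ax C \<longleftrightarrow>
    (\<forall>X. cdiff C X \<in> chom C (cbang C (cS C X)) (cS C (cbang C X))) \<and>
    (\<forall>X Y f. f \<in> chom C X Y \<longrightarrow>
        ccomp C (cdiff C Y) (cbangm C (cSm C f)) = ccomp C (cSm C (cbangm C f)) (cdiff C X)) \<and>
    (\<forall>X. ccomp C (cpi0 C (cbang C X)) (cdiff C X) = cbangm C (cpi0 C X)) \<and>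
    (\<forall>X. ccomp C (cdiff C X) (cbangm C (iota0 C X)) = iota0 C (cbang C X)) \<and>
    (\<forall>X. ccomp C (ctau C (cbang C X)) (ccomp C (cSm C (cdiff C X)) (cdiff C (cS C X)))
        = ccomp C (cdiff C X) (cbangm C (ctau C X))) \<and>
    (\<forall>X. ccomp C (cSm C (cder C X)) (cdiff C X) = cder C (cS C X)) \<and>
    (\<forall>X. ccomp C (cSm C (cdig C X)) (cdiff C X)
        = ccomp C (cdiff C (cbang C X)) (ccomp C (cbangm C (cdiff C X)) (cdig C (cS C X)))) \<and>
    ccomp C (cSm C (invm C (cunit C) (cbang C (ctop C)) (cm0 C))) (cdiff C (ctop C))
      = ccomp C (iota0 C (cunit C))
          (ccomp C (invm C (cunit C) (cbang C (ctop C)) (cm0 C)) (cbangm C (czero C (ctop C) (ctop C)))) \<and>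
    (\<forall>X0 X1.
       ccomp C (cSm C (invm C (ctens C (cbang C X0) (cbang C X1)) (cbang C (cwith C X0 X1)) (cm2 C X0 X1)))
               (cdiff C (cwith C X0 X1))
       = ccomp C (cL C (cbang C X0) (cbang C X1))
           (ccomp C (ctensm C (cdiff C X0) (cdiff C X1))
              (invm C (ctens C (cbang C (cS C X0)) (cbang C (cS C X1)))
                      (cbang C (cwith C (cS C X0) (cS C X1))) (cm2 C (cS C X0) (cS C X1))))) \<and>
    (\<forall>X. ccomp C (cflip C (cbang C X)) (ccomp C (cSm C (cdiff C X)) (cdiff C (cS C X)))
        = ccomp C (cSm C (cdiff C X)) (ccomp C (cdiff C (cS C X)) (cbangm C (cflip C X))))"

definition cdsrc :: "('o,'a) rcat \<Rightarrow> bool" where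
  "cdsrc C \<longleftrightarrow> category_ax C \<and> smc_ax C \<and> products_ax C \<and> comonad_ax C \<and>
     seely_ax C \<and> summability_ax C \<and> diff_ax C"

fun wN :: "('o,'a) rcat \<Rightarrow> 'o list \<Rightarrow> 'o" where
  "wN C [] = ctop C"
| "wN C [X] = X"
| "wN C (X # Y # Zs) = cwith C X (wN C (Y # Zs))"

fun tN :: "('o,'a) rcat \<Rightarrow> 'o list \<Rightarrow> 'o" where
  "tN C [] = cunit C"
| "tN C [X] = X"
| "tN C (X # Y # Zs) = ctens C X (tN C (Y # Zs))"

fun tmN :: "('o,'a) rcat \<Rightarrow> 'a list \<Rightarrow> 'a" where
  "tmN C [] = cid C (cunit C)"
| "tmN C [f] = f"
| "tmN C (f # g # hs) = ctensm C f (tmN C (g # hs))"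

fun mN :: "('o,'a) rcat \<Rightarrow> 'o list \<Rightarrow> 'a" where
  "mN C [] = cm0 C"
| "mN C [X] = cid C (cbang C X)"
| "mN C (X # Y # Zs) = ccomp C (cm2 C X (wN C (Y # Zs)))
                          (ctensm C (cid C (cbang C X)) (mN C (Y # Zs)))"

definition Mlin :: "('o,'a) rcat \<Rightarrow> 'o list \<Rightarrow> 'a \<Rightarrow> 'a" where
  "Mlin C Xs l = ccomp C l (ccomp C (tmN C (map (cder C) Xs))
      (invm C (tN C (map (cbang C) Xs)) (cbang C (wN C Xs)) (mN C Xs)))"

definition nlinear :: "('o,'a) rcat \<Rightarrow> 'o list \<Rightarrow> 'o \<Rightarrow> 'a \<Rightarrow> bool" where
  "nlinear C Xs Y f \<longleftrightarrow> (\<exists>l \<in> chom C (tN C Xs) Y. f = Mlin C Xs l)"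

text \<open>The functor D on the Kleisli category: D f = S f o partial_X, for f in L_!(X,Y).\<close>
definition Dk :: "('o,'a) rcat \<Rightarrow> 'o \<Rightarrow> 'a \<Rightarrow> 'a" where
  "Dk C X f = ccomp C (cSm C f) (cdiff C X)"

end

theory Submission
  imports Defs
begin

(* Write f = l o (der (x) ... (x) der) o (m^n)^-1. Since D commutes with postcomposition by
   a linear map, D(l o g) = S l o D g, everything reduces to differentiating (m^n)^-1.
   The differential axiom for the binary Seely isomorphism extends by induction on n to
     partial o m^n_SX = S m^n o L^n o (partial (x) ... (x) partial),
   where L^n iterates L; transposing across the isomorphisms m^n gives
     D((m^n)^-1) = L^n o (partial (x) ... (x) partial) o (m^n_SX)^-1.
   Naturality of L^n together with S der o partial = der then yields
     Df = (S l o L^n) o (der (x) ... (x) der) o (m^n_SX)^-1 = M(S l o L^n). *)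

lemma tN_Cons: "Xs \<noteq> [] \<Longrightarrow> tN C (X # Xs) = ctens C X (tN C Xs)"
  by (cases Xs) simp_all

lemma wN_Cons: "Xs \<noteq> [] \<Longrightarrow> wN C (X # Xs) = cwith C X (wN C Xs)"
  by (cases Xs) simp_all

lemma tmN_Cons: "fs \<noteq> [] \<Longrightarrow> tmN C (f # fs) = ctensm C f (tmN C fs)"
  by (cases fs) simp_all

lemma mN_Cons: "Xs \<noteq> [] \<Longrightarrow>
    mN C (X # Xs) = ccomp C (cm2 C X (wN C Xs)) (ctensm C (cid C (cbang C X)) (mN C Xs))"
  by (cases Xs) simp_all

locale rcat_category =
  fixes C :: "('o, 'a) rcat"
  assumes category: "category_ax C"
begin

abbreviation hom :: "'o \<Rightarrow> 'o \<Rightarrow> 'a set" where "hom \<equiv> chom C"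
abbreviation cmp :: "'a \<Rightarrow> 'a \<Rightarrow> 'a" (infixr "\<cdot>" 55) where "g \<cdot> f \<equiv> ccomp C g f"

lemma id_hom [simp]: "cid C X \<in> hom X X"
  using category unfolding category_ax_def by blast

lemma comp_hom [intro]: "f \<in> hom X Y \<Longrightarrow> g \<in> hom Y Z \<Longrightarrow> g \<cdot> f \<in> hom X Z"
  using category unfolding category_ax_def by blast

lemma comp_id_right: "f \<in> hom X Y \<Longrightarrow> f \<cdot> cid C X = f"
  using category unfolding category_ax_def by blast

lemma comp_id_left: "f \<in> hom X Y \<Longrightarrow> cid C Y \<cdot> f = f"
  using category unfolding category_ax_def by blast

lemma comp_assoc:
  "f \<in> hom W X \<Longrightarrow> g \<in> hom X Y \<Longrightarrow> h \<in> hom Y Z \<Longrightarrow> h \<cdot> (g \<cdot> f) = (h \<cdot> g) \<cdot> f"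
  using category unfolding category_ax_def by blast

lemma iso_hom: "is_iso C X Y f \<Longrightarrow> f \<in> hom X Y"
  unfolding is_iso_def by blast

lemma invm_eqI:
  assumes f: "f \<in> hom X Y" and g: "g \<in> hom Y X" "g \<cdot> f = cid C X" "f \<cdot> g = cid C Y"
  shows "invm C X Y f = g"
  unfolding invm_def
proof (rule the_equality)
  show "g \<in> hom Y X \<and> g \<cdot> f = cid C X \<and> f \<cdot> g = cid C Y" using g by blast
next
  fix g' assume g': "g' \<in> hom Y X \<and> g' \<cdot> f = cid C X \<and> f \<cdot> g' = cid C Y"
  have "g' = g' \<cdot> (f \<cdot> g)" using g g' comp_id_right by metis
  also have "\<dots> = (g' \<cdot> f) \<cdot> g" using comp_assoc[OF g(1) f] g' by blast
  also have "\<dots> = g" using g g' comp_id_left by metis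
  finally show "g' = g" .
qed

lemma iso_invm:
  assumes "is_iso C X Y f"
  shows "invm C X Y f \<in> hom Y X" "invm C X Y f \<cdot> f = cid C X" "f \<cdot> invm C X Y f = cid C Y"
proof -
  from assms obtain g where "g \<in> hom Y X" "g \<cdot> f = cid C X" "f \<cdot> g = cid C Y" "f \<in> hom X Y"
    unfolding is_iso_def by blast
  with invm_eqI show "invm C X Y f \<in> hom Y X" "invm C X Y f \<cdot> f = cid C X" "f \<cdot> invm C X Y f = cid C Y"
    by simp_all
qed

lemma iso_id: "is_iso C X X (cid C X)"
  unfolding is_iso_def using comp_id_left[OF id_hom[of X]] by auto

lemma iso_comp:
  assumes "is_iso C X Y f" "is_iso C Y Z g"
  shows "is_iso C X Z (g \<cdot> f)"
proof -
  from assms obtain f' g' where f: "f \<in> hom X Y" "f' \<in> hom Y X" "f' \<cdot> f = cid C X" "f \<cdot> f' = cid C Y"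
    and g: "g \<in> hom Y Z" "g' \<in> hom Z Y" "g' \<cdot> g = cid C Y" "g \<cdot> g' = cid C Z"
    unfolding is_iso_def by blast
  have "(f' \<cdot> g') \<cdot> (g \<cdot> f) = f' \<cdot> ((g' \<cdot> g) \<cdot> f)"
    using comp_assoc[OF comp_hom[OF f(1) g(1)] g(2) f(2)] comp_assoc[OF f(1) g(1) g(2)] by simp
  also have "\<dots> = cid C X" using f g comp_id_left by simp
  finally have left: "(f' \<cdot> g') \<cdot> (g \<cdot> f) = cid C X" .
  have "(g \<cdot> f) \<cdot> (f' \<cdot> g') = g \<cdot> ((f \<cdot> f') \<cdot> g')"
    using comp_assoc[OF comp_hom[OF g(2) f(2)] f(1) g(1)] comp_assoc[OF g(2) f(2) f(1)] by simp
  also have "\<dots> = cid C Z" using f g comp_id_left by simp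
  finally have right: "(g \<cdot> f) \<cdot> (f' \<cdot> g') = cid C Z" .
  show ?thesis unfolding is_iso_def using left right f g by blast
qed

lemma iso_transpose:
  assumes m: "is_iso C X Y m" and m': "is_iso C X' Y' m'"
    and d: "d \<in> hom Y' Y" and r: "r \<in> hom X' X"
  shows "invm C X Y m \<cdot> d = r \<cdot> invm C X' Y' m' \<longleftrightarrow> d \<cdot> m' = m \<cdot> r"
proof -
  let ?n = "invm C X Y m" and ?n' = "invm C X' Y' m'"
  note n = iso_invm[OF m] and n' = iso_invm[OF m']
  note m = iso_hom[OF m] and m' = iso_hom[OF m']
  have dm': "d \<cdot> m' \<in> hom X' Y" and nd: "?n \<cdot> d \<in> hom Y' X" using d m' n(1) by blast+
  show ?thesis
  proof
    assume eq: "?n \<cdot> d = r \<cdot> ?n'"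
    have "d \<cdot> m' = (m \<cdot> ?n) \<cdot> (d \<cdot> m')"
      using n(3) comp_id_left[OF dm'] by simp
    also have "\<dots> = m \<cdot> ((?n \<cdot> d) \<cdot> m')"
      using comp_assoc[OF dm' n(1) m] comp_assoc[OF m' d n(1)] by simp
    also have "\<dots> = m \<cdot> (r \<cdot> (?n' \<cdot> m'))"
      using eq comp_assoc[OF m' n'(1) r] by simp
    also have "\<dots> = m \<cdot> r" using n'(2) comp_id_right[OF r] by simp
    finally show "d \<cdot> m' = m \<cdot> r" .
  next
    assume eq: "d \<cdot> m' = m \<cdot> r"
    have "?n \<cdot> d = (?n \<cdot> d) \<cdot> (m' \<cdot> ?n')"
      using n'(3) comp_id_right[OF nd] by simp
    also have "\<dots> = (?n \<cdot> (d \<cdot> m')) \<cdot> ?n'"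
      using comp_assoc[OF n'(1) m' nd] comp_assoc[OF m' d n(1)] by simp
    also have "\<dots> = ((?n \<cdot> m) \<cdot> r) \<cdot> ?n'"
      using eq comp_assoc[OF r m n(1)] by simp
    also have "\<dots> = r \<cdot> ?n'" using n(2) comp_id_left[OF r] by simp
    finally show "?n \<cdot> d = r \<cdot> ?n'" .
  qed
qed

end

locale rcat_smc = rcat_category C for C :: "('o, 'a) rcat" +
  assumes smc: "smc_ax C"
begin

abbreviation tensor :: "'a \<Rightarrow> 'a \<Rightarrow> 'a" (infixr "\<otimes>" 60) where "f \<otimes> g \<equiv> ctensm C f g"

lemma tens_hom [intro]: "f \<in> hom X Y \<Longrightarrow> g \<in> hom X' Y' \<Longrightarrow> f \<otimes> g \<in> hom (ctens C X X') (ctens C Y Y')"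
  using smc unfolding smc_ax_def by (elim conjE) metis

lemma tens_id [simp]: "cid C X \<otimes> cid C Y = cid C (ctens C X Y)"
  using smc unfolding smc_ax_def by (elim conjE) metis

lemma tens_comp:
  "f \<in> hom X Y \<Longrightarrow> g \<in> hom Y Z \<Longrightarrow> f' \<in> hom X' Y' \<Longrightarrow> g' \<in> hom Y' Z' \<Longrightarrow>
    (g \<cdot> f) \<otimes> (g' \<cdot> f') = (g \<otimes> g') \<cdot> (f \<otimes> f')"
  using smc unfolding smc_ax_def by (elim conjE) metis

lemma tens_comp_id_left:
  "f \<in> hom X Y \<Longrightarrow> g \<in> hom X' Y' \<Longrightarrow> h \<in> hom Y' Z' \<Longrightarrow>
    (cid C Y \<otimes> h) \<cdot> (f \<otimes> g) = f \<otimes> (h \<cdot> g)"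
  using tens_comp[of f X Y "cid C Y" Y g X' Y' h Z'] comp_id_left by simp

lemma tens_comp_id_right:
  "f \<in> hom X Y \<Longrightarrow> g \<in> hom X' Y' \<Longrightarrow> h \<in> hom Y' Z' \<Longrightarrow>
    (f \<otimes> h) \<cdot> (cid C X \<otimes> g) = f \<otimes> (h \<cdot> g)"
  using tens_comp[of "cid C X" X X f Y g X' Y' h Z'] comp_id_right by simp

lemma iso_tens:
  assumes "is_iso C X Y f" "is_iso C X' Y' g"
  shows "is_iso C (ctens C X X') (ctens C Y Y') (f \<otimes> g)"
proof -
  from assms obtain f' g' where f: "f \<in> hom X Y" "f' \<in> hom Y X" "f' \<cdot> f = cid C X" "f \<cdot> f' = cid C Y"
    and g: "g \<in> hom X' Y'" "g' \<in> hom Y' X'" "g' \<cdot> g = cid C X'" "g \<cdot> g' = cid C Y'"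
    unfolding is_iso_def by blast
  have "(f' \<otimes> g') \<cdot> (f \<otimes> g) = cid C (ctens C X X')"
    using tens_comp[OF f(1,2) g(1,2)] f g by simp
  moreover have "(f \<otimes> g) \<cdot> (f' \<otimes> g') = cid C (ctens C Y Y')"
    using tens_comp[OF f(2,1) g(2,1)] f g by simp
  ultimately show ?thesis unfolding is_iso_def using f g by blast
qed

lemma tens_natural:
  assumes "p \<in> hom A X" "q \<in> hom B Y" "a \<in> hom A A'" "b \<in> hom B B'"
    and "p' \<in> hom A' X'" "q' \<in> hom B' Y'" "f \<in> hom X X'" "g \<in> hom Y Y'"
    and "f \<cdot> p = p' \<cdot> a" "g \<cdot> q = q' \<cdot> b"
  shows "(f \<otimes> g) \<cdot> (p \<otimes> q) = (p' \<otimes> q') \<cdot> (a \<otimes> b)"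
  using tens_comp[of p A X f X' q B Y g Y'] tens_comp[of a A A' p' X' b B B' q' Y'] assms by simp

lemma tmN_hom:
  "(\<And>X. X \<in> set Xs \<Longrightarrow> F X \<in> hom (A X) (B X)) \<Longrightarrow>
    tmN C (map F Xs) \<in> hom (tN C (map A Xs)) (tN C (map B Xs))"
  by (induction Xs rule: induct_list012) auto

lemma tmN_comp:
  "(\<And>X. X \<in> set Xs \<Longrightarrow> G X \<in> hom (A X) (B X)) \<Longrightarrow>
   (\<And>X. X \<in> set Xs \<Longrightarrow> F X \<in> hom (B X) (D X)) \<Longrightarrow>
    tmN C (map F Xs) \<cdot> tmN C (map G Xs) = tmN C (map (\<lambda>X. F X \<cdot> G X) Xs)"
proof (induction Xs rule: induct_list012)
  case 1
  then show ?case by (simp add: comp_id_left[OF id_hom])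
next
  case (2 X)
  then show ?case by simp
next
  case (3 X Y Zs)
  have G: "tmN C (map G (Y # Zs)) \<in> hom (tN C (map A (Y # Zs))) (tN C (map B (Y # Zs)))"
    by (rule tmN_hom) (use 3 in auto)
  have F: "tmN C (map F (Y # Zs)) \<in> hom (tN C (map B (Y # Zs))) (tN C (map D (Y # Zs)))"
    by (rule tmN_hom) (use 3 in auto)
  have "tmN C (map F (X # Y # Zs)) \<cdot> tmN C (map G (X # Y # Zs))
      = (F X \<otimes> tmN C (map F (Y # Zs))) \<cdot> (G X \<otimes> tmN C (map G (Y # Zs)))"
    by simp
  also have "\<dots> = (F X \<cdot> G X) \<otimes> (tmN C (map F (Y # Zs)) \<cdot> tmN C (map G (Y # Zs)))"
    using tens_comp[OF _ _ G F, of "G X" "A X" "B X" "F X" "D X"] 3(3,4) by simp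
  also have "\<dots> = tmN C (map (\<lambda>X. F X \<cdot> G X) (X # Y # Zs))"
    using 3 by simp
  finally show ?case .
qed

end

locale summable_rcat = rcat_smc C for C :: "('o, 'a) rcat" +
  assumes summability: "summability_ax C"
begin

lemma S_hom [intro]: "f \<in> hom X Y \<Longrightarrow> cSm C f \<in> hom (cS C X) (cS C Y)"
  using summability unfolding summability_ax_def by (elim conjE) metis

lemma S_id [simp]: "cSm C (cid C X) = cid C (cS C X)"
  using summability unfolding summability_ax_def by (elim conjE) metis

lemma S_comp: "f \<in> hom X Y \<Longrightarrow> g \<in> hom Y Z \<Longrightarrow> cSm C (g \<cdot> f) = cSm C g \<cdot> cSm C f"
  using summability unfolding summability_ax_def by (elim conjE) metis

lemma S_with [simp]: "cS C (cwith C X Y) = cwith C (cS C X) (cS C Y)"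
  using summability unfolding summability_ax_def by (elim conjE) metis

lemma S_top [simp]: "cS C (ctop C) = ctop C"
  using summability unfolding summability_ax_def by (elim conjE) metis

lemma pi0_hom [simp]: "cpi0 C X \<in> hom (cS C X) X"
  using summability unfolding summability_ax_def by (elim conjE) metis

lemma pi1_hom [simp]: "cpi1 C X \<in> hom (cS C X) X"
  using summability unfolding summability_ax_def by (elim conjE) metis

lemma pi0_natural: "f \<in> hom X Y \<Longrightarrow> cpi0 C Y \<cdot> cSm C f = f \<cdot> cpi0 C X"
  using summability unfolding summability_ax_def by (elim conjE) metis

lemma pi1_natural: "f \<in> hom X Y \<Longrightarrow> cpi1 C Y \<cdot> cSm C f = f \<cdot> cpi1 C X"
  using summability unfolding summability_ax_def by (elim conjE) metis

lemma pi_jointly_monic: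
  "h \<in> hom X (cS C Y) \<Longrightarrow> h' \<in> hom X (cS C Y) \<Longrightarrow>
    cpi0 C Y \<cdot> h = cpi0 C Y \<cdot> h' \<Longrightarrow> cpi1 C Y \<cdot> h = cpi1 C Y \<cdot> h' \<Longrightarrow> h = h'"
  using summability unfolding summability_ax_def by (elim conjE) metis

lemma comp_ssum:
  "summable C X Y f g \<Longrightarrow> k \<in> hom Y Z \<Longrightarrow> k \<cdot> ssum C X Y f g = ssum C X Z (k \<cdot> f) (k \<cdot> g)"
  using summability unfolding summability_ax_def by (elim conjE) metis

lemma ssum_comp:
  "summable C X Y f g \<Longrightarrow> k \<in> hom W X \<Longrightarrow> ssum C X Y f g \<cdot> k = ssum C W Y (f \<cdot> k) (g \<cdot> k)"
  using summability unfolding summability_ax_def by (elim conjE) metis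

lemma L_hom [simp]: "cL C X Y \<in> hom (ctens C (cS C X) (cS C Y)) (cS C (ctens C X Y))"
  using summability unfolding summability_ax_def by (elim conjE) metis

lemma pi0_L: "cpi0 C (ctens C X Y) \<cdot> cL C X Y = cpi0 C X \<otimes> cpi0 C Y"
  using summability unfolding summability_ax_def by (elim conjE) metis

lemma summable_L:
  "summable C (ctens C (cS C X) (cS C Y)) (ctens C X Y) (cpi1 C X \<otimes> cpi0 C Y) (cpi0 C X \<otimes> cpi1 C Y)"
  using summability unfolding summability_ax_def by (elim conjE) metis

lemma pi1_L:
  "cpi1 C (ctens C X Y) \<cdot> cL C X Y =
    ssum C (ctens C (cS C X) (cS C Y)) (ctens C X Y) (cpi1 C X \<otimes> cpi0 C Y) (cpi0 C X \<otimes> cpi1 C Y)"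
  using summability unfolding summability_ax_def by (elim conjE) metis

lemma pi0_S_comp: "h \<in> hom X Y \<Longrightarrow> k \<in> hom W (cS C X) \<Longrightarrow> cpi0 C Y \<cdot> (cSm C h \<cdot> k) = h \<cdot> (cpi0 C X \<cdot> k)"
  using comp_assoc[of k W "cS C X" "cSm C h" "cS C Y" "cpi0 C Y" Y]
    comp_assoc[of k W "cS C X" "cpi0 C X" X h Y] pi0_natural by auto

lemma pi1_S_comp: "h \<in> hom X Y \<Longrightarrow> k \<in> hom W (cS C X) \<Longrightarrow> cpi1 C Y \<cdot> (cSm C h \<cdot> k) = h \<cdot> (cpi1 C X \<cdot> k)"
  using comp_assoc[of k W "cS C X" "cSm C h" "cS C Y" "cpi1 C Y" Y]
    comp_assoc[of k W "cS C X" "cpi1 C X" X h Y] pi1_natural by auto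

lemma S_iso:
  assumes "is_iso C X Y m"
  shows "is_iso C (cS C X) (cS C Y) (cSm C m)"
    and "invm C (cS C X) (cS C Y) (cSm C m) = cSm C (invm C X Y m)"
proof -
  note n = iso_invm[OF assms] and m = iso_hom[OF assms]
  have "cSm C (invm C X Y m) \<cdot> cSm C m = cid C (cS C X)" "cSm C m \<cdot> cSm C (invm C X Y m) = cid C (cS C Y)"
    using S_comp[OF m n(1)] S_comp[OF n(1) m] n by simp_all
  with m n(1) show "is_iso C (cS C X) (cS C Y) (cSm C m)"
    and "invm C (cS C X) (cS C Y) (cSm C m) = cSm C (invm C X Y m)"
    unfolding is_iso_def by (blast intro: invm_eqI)+
qed

lemma wN_S: "wN C (map (cS C) Xs) = cS C (wN C Xs)"
  by (induction Xs rule: induct_list012) simp_all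

lemma L_natural:
  assumes f: "f \<in> hom X X'" and g: "g \<in> hom Y Y'"
  shows "cSm C (f \<otimes> g) \<cdot> cL C X Y = cL C X' Y' \<cdot> (cSm C f \<otimes> cSm C g)"
proof (rule pi_jointly_monic)
  have fg: "f \<otimes> g \<in> hom (ctens C X Y) (ctens C X' Y')" using f g by blast
  have Sfg: "cSm C f \<otimes> cSm C g \<in> hom (ctens C (cS C X) (cS C Y)) (ctens C (cS C X') (cS C Y'))"
    using f g by blast
  show "cSm C (f \<otimes> g) \<cdot> cL C X Y \<in> hom (ctens C (cS C X) (cS C Y)) (cS C (ctens C X' Y'))"
    and "cL C X' Y' \<cdot> (cSm C f \<otimes> cSm C g) \<in> hom (ctens C (cS C X) (cS C Y)) (cS C (ctens C X' Y'))"
    using comp_hom[OF L_hom S_hom[OF fg]] comp_hom[OF Sfg L_hom] by simp_all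
  have pi_tens_natural:
    "(f \<otimes> g) \<cdot> (p X \<otimes> q Y) = (p X' \<otimes> q Y') \<cdot> (cSm C f \<otimes> cSm C g)"
    if "p \<in> {cpi0 C, cpi1 C}" "q \<in> {cpi0 C, cpi1 C}" for p q
    using that f g by (intro tens_natural) (auto simp: pi0_natural pi1_natural)
  have "cpi0 C (ctens C X' Y') \<cdot> (cSm C (f \<otimes> g) \<cdot> cL C X Y) = (f \<otimes> g) \<cdot> (cpi0 C X \<otimes> cpi0 C Y)"
    using pi0_S_comp[OF fg L_hom] pi0_L by simp
  also have "\<dots> = (cpi0 C X' \<otimes> cpi0 C Y') \<cdot> (cSm C f \<otimes> cSm C g)"
    using pi_tens_natural by simp
  also have "\<dots> = cpi0 C (ctens C X' Y') \<cdot> (cL C X' Y' \<cdot> (cSm C f \<otimes> cSm C g))"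
    using comp_assoc[OF Sfg L_hom pi0_hom] pi0_L by simp
  finally show "cpi0 C (ctens C X' Y') \<cdot> (cSm C (f \<otimes> g) \<cdot> cL C X Y)
      = cpi0 C (ctens C X' Y') \<cdot> (cL C X' Y' \<cdot> (cSm C f \<otimes> cSm C g))" .
  have "cpi1 C (ctens C X' Y') \<cdot> (cSm C (f \<otimes> g) \<cdot> cL C X Y)
      = (f \<otimes> g) \<cdot> ssum C (ctens C (cS C X) (cS C Y)) (ctens C X Y)
          (cpi1 C X \<otimes> cpi0 C Y) (cpi0 C X \<otimes> cpi1 C Y)"
    using pi1_S_comp[OF fg L_hom] pi1_L by simp
  also have "\<dots> = ssum C (ctens C (cS C X) (cS C Y)) (ctens C X' Y')
      ((cpi1 C X' \<otimes> cpi0 C Y') \<cdot> (cSm C f \<otimes> cSm C g)) ((cpi0 C X' \<otimes> cpi1 C Y') \<cdot> (cSm C f \<otimes> cSm C g))"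
    using comp_ssum[OF summable_L fg] pi_tens_natural by simp
  also have "\<dots> = ssum C (ctens C (cS C X') (cS C Y')) (ctens C X' Y')
      (cpi1 C X' \<otimes> cpi0 C Y') (cpi0 C X' \<otimes> cpi1 C Y') \<cdot> (cSm C f \<otimes> cSm C g)"
    using ssum_comp[OF summable_L Sfg] by simp
  also have "\<dots> = cpi1 C (ctens C X' Y') \<cdot> (cL C X' Y' \<cdot> (cSm C f \<otimes> cSm C g))"
    using comp_assoc[OF Sfg L_hom pi1_hom] pi1_L by simp
  finally show "cpi1 C (ctens C X' Y') \<cdot> (cSm C (f \<otimes> g) \<cdot> cL C X Y)
      = cpi1 C (ctens C X' Y') \<cdot> (cL C X' Y' \<cdot> (cSm C f \<otimes> cSm C g))" .
qed

lemma L_natural_comp: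
  assumes f: "f \<in> hom X X'" and g: "g \<in> hom Y Y'" and a: "a \<in> hom A (cS C X)" and b: "b \<in> hom B (cS C Y)"
  shows "cSm C (f \<otimes> g) \<cdot> (cL C X Y \<cdot> (a \<otimes> b)) = cL C X' Y' \<cdot> ((cSm C f \<cdot> a) \<otimes> (cSm C g \<cdot> b))"
proof -
  have ab: "a \<otimes> b \<in> hom (ctens C A B) (ctens C (cS C X) (cS C Y))" using a b by blast
  have Sfg: "cSm C f \<otimes> cSm C g \<in> hom (ctens C (cS C X) (cS C Y)) (ctens C (cS C X') (cS C Y'))"
    using f g by blast
  have "cSm C (f \<otimes> g) \<cdot> (cL C X Y \<cdot> (a \<otimes> b)) = (cL C X' Y' \<cdot> (cSm C f \<otimes> cSm C g)) \<cdot> (a \<otimes> b)"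
    using comp_assoc[OF ab L_hom S_hom[OF tens_hom[OF f g]]] L_natural[OF f g] by simp
  also have "\<dots> = cL C X' Y' \<cdot> ((cSm C f \<cdot> a) \<otimes> (cSm C g \<cdot> b))"
    using comp_assoc[OF ab Sfg L_hom] tens_comp[OF a S_hom[OF f] b S_hom[OF g]] by simp
  finally show ?thesis .
qed

(* The iterated L^n : SX_0 (x) ... (x) SX_n -> S(X_0 (x) ... (x) X_n), nested like tN;
   it has no clause for the empty list. *)
fun LN :: "'o list \<Rightarrow> 'a" where
  "LN [X] = cid C (cS C X)"
| "LN (X # Y # Zs) = cL C X (tN C (Y # Zs)) \<cdot> (cid C (cS C X) \<otimes> LN (Y # Zs))"

lemma LN_Cons: "Xs \<noteq> [] \<Longrightarrow> LN (X # Xs) = cL C X (tN C Xs) \<cdot> (cid C (cS C X) \<otimes> LN Xs)"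
  by (cases Xs) simp_all

lemma LN_hom: "Xs \<noteq> [] \<Longrightarrow> LN Xs \<in> hom (tN C (map (cS C) Xs)) (cS C (tN C Xs))"
proof (induction Xs rule: list_nonempty_induct)
  case (single X)
  then show ?case by simp
next
  case (cons X Xs)
  then show ?case
    using comp_hom[OF tens_hom[OF id_hom cons.IH] L_hom] by (simp add: LN_Cons tN_Cons)
qed

lemma LN_Cons_comp:
  assumes "Xs \<noteq> []" and f: "f \<in> hom A (cS C X)" and g: "g \<in> hom B (tN C (map (cS C) Xs))"
  shows "LN (X # Xs) \<cdot> (f \<otimes> g) = cL C X (tN C Xs) \<cdot> (f \<otimes> (LN Xs \<cdot> g))"
proof -
  have L: "LN Xs \<in> hom (tN C (map (cS C) Xs)) (cS C (tN C Xs))" using LN_hom assms(1) .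
  have "LN (X # Xs) \<cdot> (f \<otimes> g) = cL C X (tN C Xs) \<cdot> ((cid C (cS C X) \<otimes> LN Xs) \<cdot> (f \<otimes> g))"
    using comp_assoc[OF tens_hom[OF f g] tens_hom[OF id_hom L] L_hom] LN_Cons[OF assms(1)] by simp
  then show ?thesis using tens_comp_id_left[OF f g L] by simp
qed

lemma LN_natural:
  assumes "Xs \<noteq> []" and "\<And>X. X \<in> set Xs \<Longrightarrow> F X \<in> hom (A X) (B X)"
  shows "cSm C (tmN C (map F Xs)) \<cdot> LN (map A Xs) = LN (map B Xs) \<cdot> tmN C (map (\<lambda>X. cSm C (F X)) Xs)"
  using assms
proof (induction Xs rule: list_nonempty_induct)
  case (single X)
  then show ?case using comp_id_left[OF S_hom] comp_id_right[OF S_hom] by simp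
next
  case (cons X Xs)
  have F: "F X \<in> hom (A X) (B X)" using cons.prems by simp
  have TF: "tmN C (map F Xs) \<in> hom (tN C (map A Xs)) (tN C (map B Xs))"
    by (rule tmN_hom) (simp add: cons.prems)
  have TSF: "tmN C (map (\<lambda>X. cSm C (F X)) Xs)
      \<in> hom (tN C (map (\<lambda>X. cS C (A X)) Xs)) (tN C (map (\<lambda>X. cS C (B X)) Xs))"
    by (rule tmN_hom) (simp add: cons.prems S_hom)
  have LA: "LN (map A Xs) \<in> hom (tN C (map (\<lambda>X. cS C (A X)) Xs)) (cS C (tN C (map A Xs)))"
    using LN_hom[of "map A Xs"] cons.hyps by (simp add: o_def)
  have LB: "LN (map B Xs) \<in> hom (tN C (map (\<lambda>X. cS C (B X)) Xs)) (cS C (tN C (map B Xs)))"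
    using LN_hom[of "map B Xs"] cons.hyps by (simp add: o_def)
  have IH: "cSm C (tmN C (map F Xs)) \<cdot> LN (map A Xs) = LN (map B Xs) \<cdot> tmN C (map (\<lambda>X. cSm C (F X)) Xs)"
    using cons by simp
  have "cSm C (F X \<otimes> tmN C (map F Xs)) \<cdot> (cL C (A X) (tN C (map A Xs)) \<cdot> (cid C (cS C (A X)) \<otimes> LN (map A Xs)))
      = cL C (B X) (tN C (map B Xs))
        \<cdot> ((cSm C (F X) \<cdot> cid C (cS C (A X))) \<otimes> (cSm C (tmN C (map F Xs)) \<cdot> LN (map A Xs)))"
    using L_natural_comp[OF F TF id_hom LA] .
  also have "\<dots> = cL C (B X) (tN C (map B Xs))
      \<cdot> (cSm C (F X) \<otimes> (LN (map B Xs) \<cdot> tmN C (map (\<lambda>X. cSm C (F X)) Xs)))"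
    using comp_id_right[OF S_hom[OF F]] IH by simp
  also have "\<dots> = LN (map B (X # Xs)) \<cdot> (cSm C (F X) \<otimes> tmN C (map (\<lambda>X. cSm C (F X)) Xs))"
    using LN_Cons_comp[of "map B Xs" "cSm C (F X)" _ "B X"] S_hom[OF F] TSF cons.hyps by (simp add: o_def)
  finally show ?case
    using cons.hyps by (simp add: LN_Cons tmN_Cons)
qed

end

locale coherent_differential_rcat = summable_rcat C for C :: "('o, 'a) rcat" +
  assumes comonad: "comonad_ax C" and seely: "seely_ax C" and differential: "diff_ax C"
begin

lemma der_hom [simp]: "cder C X \<in> hom (cbang C X) X"
  using comonad unfolding comonad_ax_def by (elim conjE) metis

lemma m2_iso: "is_iso C (ctens C (cbang C X) (cbang C Y)) (cbang C (cwith C X Y)) (cm2 C X Y)"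
  using seely unfolding seely_ax_def by (elim conjE) metis

lemma diff_hom [simp]: "cdiff C X \<in> hom (cbang C (cS C X)) (cS C (cbang C X))"
  using differential unfolding diff_ax_def by (elim conjE) metis

lemma S_der_diff: "cSm C (cder C X) \<cdot> cdiff C X = cder C (cS C X)"
  using differential unfolding diff_ax_def by (elim conjE) metis

lemma S_m2_inv_diff:
  "cSm C (invm C (ctens C (cbang C X0) (cbang C X1)) (cbang C (cwith C X0 X1)) (cm2 C X0 X1))
      \<cdot> cdiff C (cwith C X0 X1)
    = cL C (cbang C X0) (cbang C X1) \<cdot> (cdiff C X0 \<otimes> cdiff C X1) \<cdot>
      invm C (ctens C (cbang C (cS C X0)) (cbang C (cS C X1)))
        (cbang C (cwith C (cS C X0) (cS C X1))) (cm2 C (cS C X0) (cS C X1))"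
  using differential unfolding diff_ax_def by (elim conjE) metis

lemma diff_m2:
  "cdiff C (cwith C X0 X1) \<cdot> cm2 C (cS C X0) (cS C X1)
    = cSm C (cm2 C X0 X1) \<cdot> (cL C (cbang C X0) (cbang C X1) \<cdot> (cdiff C X0 \<otimes> cdiff C X1))"
proof -
  let ?L = "cL C (cbang C X0) (cbang C X1)" and ?dd = "cdiff C X0 \<otimes> cdiff C X1"
  have d: "cdiff C (cwith C X0 X1) \<in> hom (cbang C (cwith C (cS C X0) (cS C X1))) (cS C (cbang C (cwith C X0 X1)))"
    using diff_hom[of "cwith C X0 X1"] by simp
  have dd: "?dd \<in> hom (ctens C (cbang C (cS C X0)) (cbang C (cS C X1))) (ctens C (cS C (cbang C X0)) (cS C (cbang C X1)))"
    using diff_hom by blast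
  have Ldd: "?L \<cdot> ?dd \<in> hom (ctens C (cbang C (cS C X0)) (cbang C (cS C X1))) (cS C (ctens C (cbang C X0) (cbang C X1)))"
    using comp_hom[OF dd L_hom] .
  have "?L \<cdot> ?dd \<cdot> invm C (ctens C (cbang C (cS C X0)) (cbang C (cS C X1)))
        (cbang C (cwith C (cS C X0) (cS C X1))) (cm2 C (cS C X0) (cS C X1))
      = (?L \<cdot> ?dd) \<cdot> invm C (ctens C (cbang C (cS C X0)) (cbang C (cS C X1)))
        (cbang C (cwith C (cS C X0) (cS C X1))) (cm2 C (cS C X0) (cS C X1))"
    using comp_assoc[OF iso_invm(1)[OF m2_iso] dd L_hom] .
  then show ?thesis
    using S_m2_inv_diff iso_transpose[OF S_iso(1)[OF m2_iso] m2_iso d Ldd] S_iso(2)[OF m2_iso] by simp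
qed

lemma mN_iso: "Xs \<noteq> [] \<Longrightarrow> is_iso C (tN C (map (cbang C) Xs)) (cbang C (wN C Xs)) (mN C Xs)"
proof (induction Xs rule: list_nonempty_induct)
  case (single X)
  then show ?case using iso_id by simp
next
  case (cons X Xs)
  then show ?case
    using iso_comp[OF iso_tens[OF iso_id cons.IH] m2_iso] by (simp add: tN_Cons wN_Cons mN_Cons)
qed

lemma diff_m2_tens:
  assumes g: "g \<in> hom A (cbang C (cS C Y))"
  shows "cdiff C (cwith C X Y) \<cdot> (cm2 C (cS C X) (cS C Y) \<cdot> (cid C (cbang C (cS C X)) \<otimes> g))
    = cSm C (cm2 C X Y) \<cdot> (cL C (cbang C X) (cbang C Y) \<cdot> (cdiff C X \<otimes> (cdiff C Y \<cdot> g)))"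
proof -
  let ?L = "cL C (cbang C X) (cbang C Y)" and ?dd = "cdiff C X \<otimes> cdiff C Y"
  have m2: "cm2 C X Y \<in> hom (ctens C (cbang C X) (cbang C Y)) (cbang C (cwith C X Y))"
    and m2': "cm2 C (cS C X) (cS C Y)
      \<in> hom (ctens C (cbang C (cS C X)) (cbang C (cS C Y))) (cbang C (cwith C (cS C X) (cS C Y)))"
    using iso_hom[OF m2_iso] by simp_all
  have d: "cdiff C (cwith C X Y) \<in> hom (cbang C (cwith C (cS C X) (cS C Y))) (cS C (cbang C (cwith C X Y)))"
    using diff_hom[of "cwith C X Y"] by simp
  have idg: "cid C (cbang C (cS C X)) \<otimes> g
      \<in> hom (ctens C (cbang C (cS C X)) A) (ctens C (cbang C (cS C X)) (cbang C (cS C Y)))"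
    using tens_hom[OF id_hom g] .
  have dd: "?dd \<in> hom (ctens C (cbang C (cS C X)) (cbang C (cS C Y))) (ctens C (cS C (cbang C X)) (cS C (cbang C Y)))"
    using tens_hom[OF diff_hom diff_hom] .
  have "cdiff C (cwith C X Y) \<cdot> (cm2 C (cS C X) (cS C Y) \<cdot> (cid C (cbang C (cS C X)) \<otimes> g))
      = (cSm C (cm2 C X Y) \<cdot> (?L \<cdot> ?dd)) \<cdot> (cid C (cbang C (cS C X)) \<otimes> g)"
    using comp_assoc[OF idg m2' d] diff_m2 by simp
  also have "\<dots> = cSm C (cm2 C X Y) \<cdot> (?L \<cdot> (?dd \<cdot> (cid C (cbang C (cS C X)) \<otimes> g)))"
    using comp_assoc[OF idg comp_hom[OF dd L_hom] S_hom[OF m2]] comp_assoc[OF idg dd L_hom] by simp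
  finally show ?thesis
    using tens_comp_id_right[OF diff_hom g diff_hom] by simp
qed

lemma diff_mN:
  "Xs \<noteq> [] \<Longrightarrow> cdiff C (wN C Xs) \<cdot> mN C (map (cS C) Xs)
    = cSm C (mN C Xs) \<cdot> (LN (map (cbang C) Xs) \<cdot> tmN C (map (cdiff C) Xs))"
proof (induction Xs rule: list_nonempty_induct)
  case (single X)
  have d: "cdiff C X \<in> hom (cbang C (cS C X)) (cS C (cbang C X))" by simp
  show ?case using comp_id_left[OF d] comp_id_right[OF d] by simp
next
  case (cons X Xs)
  define W where "W = wN C Xs"
  let ?M' = "mN C (map (cS C) Xs)" and ?M = "mN C Xs" and ?T = "tmN C (map (cdiff C) Xs)"
    and ?Lr = "LN (map (cbang C) Xs)" and ?dX = "cdiff C X" and ?m2 = "cm2 C X W"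
    and ?L = "cL C (cbang C X) (tN C (map (cbang C) Xs))" and ?L' = "cL C (cbang C X) (cbang C W)"
  let ?R = "cSm C ?M \<cdot> (?Lr \<cdot> ?T)"
  have M': "?M' \<in> hom (tN C (map (\<lambda>X. cbang C (cS C X)) Xs)) (cbang C (cS C W))"
    using iso_hom[OF mN_iso[of "map (cS C) Xs"]] cons.hyps by (simp add: o_def wN_S W_def)
  have M: "?M \<in> hom (tN C (map (cbang C) Xs)) (cbang C W)"
    using iso_hom[OF mN_iso[OF cons.hyps]] by (simp add: W_def)
  have T: "?T \<in> hom (tN C (map (\<lambda>X. cbang C (cS C X)) Xs)) (tN C (map (\<lambda>X. cS C (cbang C X)) Xs))"
    by (rule tmN_hom) simp
  have LrT: "?Lr \<cdot> ?T \<in> hom (tN C (map (\<lambda>X. cbang C (cS C X)) Xs)) (cS C (tN C (map (cbang C) Xs)))"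
    using comp_hom[OF T, of ?Lr] LN_hom[of "map (cbang C) Xs"] cons.hyps by (simp add: o_def)
  have dX: "?dX \<in> hom (cbang C (cS C X)) (cS C (cbang C X))" by simp
  have m2: "?m2 \<in> hom (ctens C (cbang C X) (cbang C W)) (cbang C (cwith C X W))"
    using iso_hom[OF m2_iso] .
  have lhs: "cdiff C (cwith C X W) \<cdot> (cm2 C (cS C X) (cS C W) \<cdot> (cid C (cbang C (cS C X)) \<otimes> ?M'))
      = cSm C ?m2 \<cdot> (?L' \<cdot> (?dX \<otimes> ?R))"
    using diff_m2_tens[OF M'] cons.IH by (simp add: W_def)
  have "cSm C (?m2 \<cdot> (cid C (cbang C X) \<otimes> ?M)) \<cdot> (LN (map (cbang C) (X # Xs)) \<cdot> (?dX \<otimes> ?T))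
      = (cSm C ?m2 \<cdot> cSm C (cid C (cbang C X) \<otimes> ?M)) \<cdot> (?L \<cdot> (?dX \<otimes> (?Lr \<cdot> ?T)))"
    using LN_Cons_comp[of "map (cbang C) Xs" ?dX "cbang C (cS C X)" "cbang C X" ?T
        "tN C (map (\<lambda>X. cbang C (cS C X)) Xs)"] dX T cons.hyps
      S_comp[OF tens_hom[OF id_hom M] m2] by (simp add: o_def)
  also have "\<dots> = cSm C ?m2 \<cdot> (cSm C (cid C (cbang C X) \<otimes> ?M) \<cdot> (?L \<cdot> (?dX \<otimes> (?Lr \<cdot> ?T))))"
    using comp_assoc[OF comp_hom[OF tens_hom[OF dX LrT] L_hom] S_hom[OF tens_hom[OF id_hom M]] S_hom[OF m2]]
    by simp
  also have "\<dots> = cSm C ?m2 \<cdot> (?L' \<cdot> (?dX \<otimes> ?R))"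
    using L_natural_comp[OF id_hom M dX LrT] comp_id_left[OF dX] by simp
  finally show ?case
    using lhs cons.hyps by (simp add: W_def wN_S wN_Cons mN_Cons tmN_Cons)
qed

lemma Dk_comp:
  assumes g: "g \<in> hom (cbang C X) Y" and l: "l \<in> hom Y Z"
  shows "Dk C X (l \<cdot> g) = cSm C l \<cdot> Dk C X g"
  unfolding Dk_def using S_comp[OF g l] comp_assoc[OF diff_hom S_hom[OF g] S_hom[OF l]] by simp

lemma Dk_invm_mN:
  assumes "Xs \<noteq> []"
  shows "Dk C (wN C Xs) (invm C (tN C (map (cbang C) Xs)) (cbang C (wN C Xs)) (mN C Xs))
    = (LN (map (cbang C) Xs) \<cdot> tmN C (map (cdiff C) Xs))
      \<cdot> invm C (tN C (map (cbang C) (map (cS C) Xs))) (cbang C (wN C (map (cS C) Xs))) (mN C (map (cS C) Xs))"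
proof -
  note M = mN_iso[OF assms] and M' = mN_iso[of "map (cS C) Xs"]
  have d: "cdiff C (wN C Xs) \<in> hom (cbang C (wN C (map (cS C) Xs))) (cS C (cbang C (wN C Xs)))"
    using diff_hom by (simp add: wN_S)
  have T: "tmN C (map (cdiff C) Xs)
      \<in> hom (tN C (map (cbang C) (map (cS C) Xs))) (tN C (map (\<lambda>X. cS C (cbang C X)) Xs))"
    using tmN_hom[of Xs "cdiff C" "\<lambda>X. cbang C (cS C X)" "\<lambda>X. cS C (cbang C X)"] by (simp add: o_def)
  have L: "LN (map (cbang C) Xs) \<in> hom (tN C (map (\<lambda>X. cS C (cbang C X)) Xs)) (cS C (tN C (map (cbang C) Xs)))"
    using LN_hom[of "map (cbang C) Xs"] assms by (simp add: o_def)
  show ?thesis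
    unfolding Dk_def
    using iso_transpose[OF S_iso(1)[OF M] M' d comp_hom[OF T L]] S_iso(2)[OF M] diff_mN[OF assms] assms
    by simp
qed

lemma S_tmN_der_LN:
  assumes "Xs \<noteq> []"
  shows "cSm C (tmN C (map (cder C) Xs)) \<cdot> (LN (map (cbang C) Xs) \<cdot> tmN C (map (cdiff C) Xs))
    = LN Xs \<cdot> tmN C (map (cder C) (map (cS C) Xs))"
proof -
  have der: "tmN C (map (cder C) Xs) \<in> hom (tN C (map (cbang C) Xs)) (tN C Xs)"
    using tmN_hom[of Xs "cder C" "cbang C" "\<lambda>X. X"] by simp
  have diffs: "tmN C (map (cdiff C) Xs)
      \<in> hom (tN C (map (\<lambda>X. cbang C (cS C X)) Xs)) (tN C (map (\<lambda>X. cS C (cbang C X)) Xs))"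
    by (rule tmN_hom) simp
  have L: "LN (map (cbang C) Xs) \<in> hom (tN C (map (\<lambda>X. cS C (cbang C X)) Xs)) (cS C (tN C (map (cbang C) Xs)))"
    using LN_hom[of "map (cbang C) Xs"] assms by (simp add: o_def)
  have S_ders: "tmN C (map (\<lambda>X. cSm C (cder C X)) Xs)
      \<in> hom (tN C (map (\<lambda>X. cS C (cbang C X)) Xs)) (tN C (map (cS C) Xs))"
    by (rule tmN_hom) (simp add: S_hom)
  have "cSm C (tmN C (map (cder C) Xs)) \<cdot> (LN (map (cbang C) Xs) \<cdot> tmN C (map (cdiff C) Xs))
      = (LN Xs \<cdot> tmN C (map (\<lambda>X. cSm C (cder C X)) Xs)) \<cdot> tmN C (map (cdiff C) Xs)"
    using comp_assoc[OF diffs L S_hom[OF der]] LN_natural[OF assms, of "cder C" "cbang C" "\<lambda>X. X"] by simp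
  also have "\<dots> = LN Xs \<cdot> tmN C (map (\<lambda>X. cSm C (cder C X) \<cdot> cdiff C X) Xs)"
    using comp_assoc[OF diffs S_ders LN_hom[OF assms]] tmN_comp[of Xs "cdiff C" "\<lambda>X. cbang C (cS C X)"
        "\<lambda>X. cS C (cbang C X)" "\<lambda>X. cSm C (cder C X)" "cS C"]
    by (simp add: S_hom)
  finally show ?thesis by (simp add: S_der_diff o_def)
qed

lemma Dk_Mlin:
  assumes "Xs \<noteq> []" and l: "l \<in> hom (tN C Xs) Y"
  shows "Dk C (wN C Xs) (Mlin C Xs l) = Mlin C (map (cS C) Xs) (cSm C l \<cdot> LN Xs)"
proof -
  let ?T = "tmN C (map (cder C) Xs)" and ?T' = "tmN C (map (cder C) (map (cS C) Xs))"
    and ?Mi = "invm C (tN C (map (cbang C) Xs)) (cbang C (wN C Xs)) (mN C Xs)"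
    and ?Mi' = "invm C (tN C (map (cbang C) (map (cS C) Xs))) (cbang C (wN C (map (cS C) Xs)))
      (mN C (map (cS C) Xs))"
    and ?R = "LN (map (cbang C) Xs) \<cdot> tmN C (map (cdiff C) Xs)"
  have T: "?T \<in> hom (tN C (map (cbang C) Xs)) (tN C Xs)"
    using tmN_hom[of Xs "cder C" "cbang C" "\<lambda>X. X"] by simp
  have T': "?T' \<in> hom (tN C (map (cbang C) (map (cS C) Xs))) (tN C (map (cS C) Xs))"
    using tmN_hom[of "map (cS C) Xs" "cder C" "cbang C" "\<lambda>X. X"] by (simp only: map_ident) simp
  have Mi: "?Mi \<in> hom (cbang C (wN C Xs)) (tN C (map (cbang C) Xs))"
    using iso_invm(1)[OF mN_iso[OF assms(1)]] .
  have Mi': "?Mi' \<in> hom (cbang C (wN C (map (cS C) Xs))) (tN C (map (cbang C) (map (cS C) Xs)))"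
    using iso_invm(1)[OF mN_iso[of "map (cS C) Xs"]] assms(1) by simp
  have R: "?R \<in> hom (tN C (map (cbang C) (map (cS C) Xs))) (cS C (tN C (map (cbang C) Xs)))"
    using tmN_hom[of Xs "cdiff C" "\<lambda>X. cbang C (cS C X)" "\<lambda>X. cS C (cbang C X)"]
      LN_hom[of "map (cbang C) Xs"] assms(1) by (auto simp: o_def)
  have L: "LN Xs \<in> hom (tN C (map (cS C) Xs)) (cS C (tN C Xs))" using LN_hom[OF assms(1)] .
  have "Dk C (wN C Xs) (Mlin C Xs l) = cSm C l \<cdot> (cSm C ?T \<cdot> Dk C (wN C Xs) ?Mi)"
    unfolding Mlin_def using Dk_comp[OF comp_hom[OF Mi T] l] Dk_comp[OF Mi T] by simp
  also have "\<dots> = cSm C l \<cdot> ((cSm C ?T \<cdot> ?R) \<cdot> ?Mi')"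
    using Dk_invm_mN[OF assms(1)] comp_assoc[OF Mi' R S_hom[OF T]] by simp
  also have "\<dots> = (cSm C l \<cdot> LN Xs) \<cdot> (?T' \<cdot> ?Mi')"
    using S_tmN_der_LN[OF assms(1)] comp_assoc[OF Mi' T' L] comp_assoc[OF comp_hom[OF Mi' T'] L S_hom[OF l]]
    by simp
  finally show ?thesis unfolding Mlin_def .
qed

end

theorem mainTheorem12:
  fixes C :: "('o, 'a) rcat" and Xs :: "'o list" and Y :: 'o and f :: 'a
  assumes "cdsrc C"
    and "Xs \<noteq> []"
    and "nlinear C Xs Y f"
  shows "nlinear C (map (cS C) Xs) (cS C Y) (Dk C (wN C Xs) f)"
proof -
  interpret coherent_differential_rcat C
    using assms(1) unfolding cdsrc_def by unfold_locales auto
  from assms(3) obtain l where l: "l \<in> hom (tN C Xs) Y" and f: "f = Mlin C Xs l"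
    unfolding nlinear_def by blast
  have "cSm C l \<cdot> LN Xs \<in> hom (tN C (map (cS C) Xs)) (cS C Y)"
    using LN_hom[OF assms(2)] S_hom[OF l] by blast
  then show ?thesis
    unfolding nlinear_def f Dk_Mlin[OF assms(2) l] by blast
qed

end
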